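(* Let $M$ be a structure in a countable vocabulary $L$ and let $\phi$ be a first order $L$-sentence in negation normal form. There is a mapping $\Phi$ such that for every strategy $\tau$ of Eloise in the evaluation game $G(M,\phi)$, $\Phi(\tau)$ is a strategy of Eloise in the model existence game $\mathrm{MEG}(\phi)$. If $\tau$ is a winning strategy, then so is $\Phi(\tau)$.
   Context: An assignment into a set $X$ is a map from a finite set of variables into $X$; $s(a/x)$ denotes the assignment agreeing with $s$ except that it sends $x$ to $a$. A formula is in negation normal form if negation occurs only in front of atomic formulas; the connectives are $\neg,\wedge,\vee,\forall,\exists$. Evaluation game $G(M,\phi)$: players Abelard and Eloise. Positions are pairs $(\psi,s)$ with $\psi$ a subformula of $\phi$ and $s$ an assignment into $M$; initial position $(\phi,\emptyset)$. At $(\psi,s)$: if $\psi$ is a literal, the game ends and Eloise wins iff $s$ satisfies $\psi$ in $M$; if $\psi=\psi_0\wedge\psi_1$, Abelard chooses the next position $(\psi_0,s)$ or $(\psi_1,s)$; if $\psi=\psi_0\vee\psi_1$, Eloise chooses it; if $\psi=\forall x\theta$, Abelard chooses $a\in M$ and the next position is $(\theta,s(a/x))$; if $\psi=\exists x\theta$, Eloise chooses $a\in M$ and the next position is $(\theta,s(a/x))$. A strategy is winning if its player wins every play following it. Model existence game $\mathrm{MEG}(\phi)$: let $C=\{c_0,c_1,\ldots\}$ be a countable set of new distinct constant symbols; a $C$-assignment is an assignment into $C$. Positions are finite sets $S$ of pairs $(\psi,s)$ with $\psi$ a subformula of $\phi$ and $s$ a $C$-assignment; the initial position is $\{(\phi,\emptyset)\}$.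 At each move, given the position $S$, Abelard selects a pair in $S$ and one of the following applies: if $(\psi_0\wedge\psi_1,s)\in S$, Abelard may decide that the next position is $S\cup\{(\psi_0,s)\}$ or $S\cup\{(\psi_1,s)\}$; if $(\psi_0\vee\psi_1,s)\in S$, Abelard may demand that Eloise choose whether the next position is $S\cup\{(\psi_0,s)\}$ or $S\cup\{(\psi_1,s)\}$; if $(\forall x\theta,s)\in S$, Abelard may choose $n\in\mathbb N$ and the next position is $S\cup\{(\theta,s(c_n/x))\}$; if $(\exists x\theta,s)\in S$, Abelard may demand that Eloise choose some $c_n$, and the next position is $S\cup\{(\theta,s(c_n/x))\}$. Abelard wins if at some point the position contains both $(\psi,s)$ and $(\neg\psi,s')$ with $\psi$ atomic and $s(x)=s'(x)$ for all variables $x$ of $\psi$. Otherwise (the game continuing for infinitely many moves) Eloise wins. *)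

theory Defs
  imports "HOL-Library.Countable"
begin

text \<open>Function symbols (including constants, as 0-ary functions) have type 'f,
  relation symbols type 'r; variables are natural numbers.\<close>

datatype 'f tm = Var nat | Fn 'f "'f tm list"

datatype ('f, 'r) atom = Eq "'f tm" "'f tm" | Rel 'r "'f tm list"

text \<open>Formulas in negation normal form: negation only in front of atoms.
  \<open>Lit True a\<close> is the atom \<open>a\<close>, \<open>Lit False a\<close> is \<open>\<not> a\<close>.\<close>
datatype ('f, 'r) fm =
    Lit bool "('f, 'r) atom"
  | And "('f, 'r) fm" "('f, 'r) fm"
  | Or "('f, 'r) fm" "('f, 'r) fm"
  | All nat "('f, 'r) fm"
  | Ex nat "('f, 'r) fm"

fun vars_tm :: "'f tm \<Rightarrow> nat set" where
  "vars_tm (Var x) = {x}"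
| "vars_tm (Fn f ts) = (\<Union>t\<in>set ts. vars_tm t)"

fun vars_atom :: "('f, 'r) atom \<Rightarrow> nat set" where
  "vars_atom (Eq t u) = vars_tm t \<union> vars_tm u"
| "vars_atom (Rel r ts) = (\<Union>t\<in>set ts. vars_tm t)"

fun free_vars :: "('f, 'r) fm \<Rightarrow> nat set" where
  "free_vars (Lit b a) = vars_atom a"
| "free_vars (And p q) = free_vars p \<union> free_vars q"
| "free_vars (Or p q) = free_vars p \<union> free_vars q"
| "free_vars (All x p) = free_vars p - {x}"
| "free_vars (Ex x p) = free_vars p - {x}"

definition sentence :: "('f, 'r) fm \<Rightarrow> bool" where
  "sentence \<phi> \<longleftrightarrow> free_vars \<phi> = {}"

text \<open>A structure with universe the (nonempty) type 'a.\<close>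
datatype ('f, 'r, 'a) struc =
  Struc (fun_of: "'f \<Rightarrow> 'a list \<Rightarrow> 'a") (rel_of: "'r \<Rightarrow> 'a list \<Rightarrow> bool")

fun eval_tm :: "('f, 'r, 'a) struc \<Rightarrow> (nat \<rightharpoonup> 'a) \<Rightarrow> 'f tm \<Rightarrow> 'a" where
  "eval_tm M s (Var x) = the (s x)"
| "eval_tm M s (Fn f ts) = fun_of M f (map (eval_tm M s) ts)"

fun holds_atom :: "('f, 'r, 'a) struc \<Rightarrow> (nat \<rightharpoonup> 'a) \<Rightarrow> ('f, 'r) atom \<Rightarrow> bool" where
  "holds_atom M s (Eq t u) = (eval_tm M s t = eval_tm M s u)"
| "holds_atom M s (Rel r ts) = rel_of M r (map (eval_tm M s) ts)"

type_synonym ('f, 'r, 'a) eg_pos = "('f, 'r) fm \<times> (nat \<rightharpoonup> 'a)"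

fun eg_next :: "('f, 'r, 'a) eg_pos \<Rightarrow> ('f, 'r, 'a) eg_pos \<Rightarrow> bool" where
  "eg_next (Lit b a, s) q = False"
| "eg_next (And p0 p1, s) q = (q = (p0, s) \<or> q = (p1, s))"
| "eg_next (Or p0 p1, s) q = (q = (p0, s) \<or> q = (p1, s))"
| "eg_next (All x p, s) q = (\<exists>a. q = (p, s(x \<mapsto> a)))"
| "eg_next (Ex x p, s) q = (\<exists>a. q = (p, s(x \<mapsto> a)))"

fun eg_eloise_turn :: "('f, 'r) fm \<Rightarrow> bool" where
  "eg_eloise_turn (Or p q) = True"
| "eg_eloise_turn (Ex x p) = True"
| "eg_eloise_turn _ = False"

fun is_lit :: "('f, 'r) fm \<Rightarrow> bool" where
  "is_lit (Lit b a) = True"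
| "is_lit _ = False"

text \<open>Eloise's strategies map histories (nonempty lists of positions, the last
  being the current one) to the next position.\<close>
type_synonym ('f, 'r, 'a) eg_strat = "('f, 'r, 'a) eg_pos list \<Rightarrow> ('f, 'r, 'a) eg_pos"

definition eg_play ::
  "('f, 'r) fm \<Rightarrow> ('f, 'r, 'a) eg_strat \<Rightarrow> ('f, 'r, 'a) eg_pos list \<Rightarrow> bool" where
  "eg_play \<phi> \<tau> ps \<longleftrightarrow> ps \<noteq> [] \<and> ps ! 0 = (\<phi>, Map.empty) \<and>
     (\<forall>i. Suc i < length ps \<longrightarrow>
        eg_next (ps ! i) (ps ! Suc i) \<and>
        (eg_eloise_turn (fst (ps ! i)) \<longrightarrow> ps ! Suc i = \<tau> (take (Suc i) ps)))"

definition eg_strategy :: "('f, 'r) fm \<Rightarrow> ('f, 'r, 'a) eg_strat \<Rightarrow> bool" where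
  "eg_strategy \<phi> \<tau> \<longleftrightarrow>
     (\<forall>ps. eg_play \<phi> \<tau> ps \<and> eg_eloise_turn (fst (last ps)) \<longrightarrow> eg_next (last ps) (\<tau> ps))"

text \<open>Every play is finite and ends at a literal; Eloise wins iff the literal is
  satisfied.\<close>
definition eg_winning ::
  "('f, 'r, 'a) struc \<Rightarrow> ('f, 'r) fm \<Rightarrow> ('f, 'r, 'a) eg_strat \<Rightarrow> bool" where
  "eg_winning M \<phi> \<tau> \<longleftrightarrow> eg_strategy \<phi> \<tau> \<and>
     (\<forall>ps b a. eg_play \<phi> \<tau> ps \<and> fst (last ps) = Lit b a \<longrightarrow>
        (b = holds_atom M (snd (last ps)) a))"

text \<open>The new constants C = {c_0, c_1, ...} are represented by their indices;
  a C-assignment is a finite partial map from variables to indices.\<close>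
type_synonym ('f, 'r) meg_pair = "('f, 'r) fm \<times> (nat \<rightharpoonup> nat)"
type_synonym ('f, 'r) meg_pos = "('f, 'r) meg_pair set"

text \<open>Abelard's moves: he selects a pair of the current position and either
  decides himself (conjunction: which conjunct; universal: the index n) or
  demands a choice from Eloise (disjunction, existential).\<close>
datatype ('f, 'r) amove =
    AConj "('f, 'r) fm" "('f, 'r) fm" "nat \<rightharpoonup> nat" bool
  | ADisj "('f, 'r) fm" "('f, 'r) fm" "nat \<rightharpoonup> nat"
  | AAll nat "('f, 'r) fm" "nat \<rightharpoonup> nat" nat
  | AEx nat "('f, 'r) fm" "nat \<rightharpoonup> nat"

fun meg_abelard_ok :: "('f, 'r) meg_pos \<Rightarrow> ('f, 'r) amove \<Rightarrow> bool" where
  "meg_abelard_ok S (AConj p0 p1 s b) = ((And p0 p1, s) \<in> S)"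
| "meg_abelard_ok S (ADisj p0 p1 s) = ((Or p0 p1, s) \<in> S)"
| "meg_abelard_ok S (AAll x p s n) = ((All x p, s) \<in> S)"
| "meg_abelard_ok S (AEx x p s) = ((Ex x p, s) \<in> S)"

fun eloise_demand :: "('f, 'r) amove \<Rightarrow> bool" where
  "eloise_demand (ADisj p0 p1 s) = True"
| "eloise_demand (AEx x p s) = True"
| "eloise_demand _ = False"

fun meg_eloise_ok :: "('f, 'r) meg_pos \<Rightarrow> ('f, 'r) amove \<Rightarrow> ('f, 'r) meg_pos \<Rightarrow> bool" where
  "meg_eloise_ok S (ADisj p0 p1 s) S' =
     (S' = S \<union> {(p0, s)} \<or> S' = S \<union> {(p1, s)})"
| "meg_eloise_ok S (AEx x p s) S' = (\<exists>n. S' = S \<union> {(p, s(x \<mapsto> n))})"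
| "meg_eloise_ok S _ S' = False"

text \<open>A history is a nonempty list of rounds (position, Abelard's move at it);
  Eloise's strategy maps a history whose last move is a demand to the next
  position.\<close>
type_synonym ('f, 'r) meg_strat = "(('f, 'r) meg_pos \<times> ('f, 'r) amove) list \<Rightarrow> ('f, 'r) meg_pos"

definition meg_step ::
  "('f, 'r) meg_strat \<Rightarrow> (('f, 'r) meg_pos \<times> ('f, 'r) amove) list \<Rightarrow> ('f, 'r) meg_pos \<Rightarrow> bool" where
  "meg_step \<sigma> h S' \<longleftrightarrow> (case snd (last h) of
       AConj p0 p1 s b \<Rightarrow> S' = fst (last h) \<union> {(if b then p1 else p0, s)}
     | AAll x p s n \<Rightarrow> S' = fst (last h) \<union> {(p, s(x \<mapsto> n))}
     | ADisj p0 p1 s \<Rightarrow> S' = \<sigma> h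
     | AEx x p s \<Rightarrow> S' = \<sigma> h)"

definition meg_partial ::
  "('f, 'r) fm \<Rightarrow> ('f, 'r) meg_strat \<Rightarrow> (('f, 'r) meg_pos \<times> ('f, 'r) amove) list \<Rightarrow> bool" where
  "meg_partial \<phi> \<sigma> h \<longleftrightarrow> h \<noteq> [] \<and> fst (h ! 0) = {(\<phi>, Map.empty)} \<and>
     (\<forall>i < length h. meg_abelard_ok (fst (h ! i)) (snd (h ! i))) \<and>
     (\<forall>i. Suc i < length h \<longrightarrow> meg_step \<sigma> (take (Suc i) h) (fst (h ! Suc i)))"

definition meg_strategy :: "('f, 'r) fm \<Rightarrow> ('f, 'r) meg_strat \<Rightarrow> bool" where
  "meg_strategy \<phi> \<sigma> \<longleftrightarrow>
     (\<forall>h. meg_partial \<phi> \<sigma> h \<and> eloise_demand (snd (last h)) \<longrightarrow>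
        meg_eloise_ok (fst (last h)) (snd (last h)) (\<sigma> h))"

definition meg_play ::
  "('f, 'r) fm \<Rightarrow> ('f, 'r) meg_strat \<Rightarrow> (nat \<Rightarrow> ('f, 'r) meg_pos \<times> ('f, 'r) amove) \<Rightarrow> bool" where
  "meg_play \<phi> \<sigma> P \<longleftrightarrow> (\<forall>k. meg_partial \<phi> \<sigma> (map P [0..<Suc k]))"

text \<open>Abelard's winning condition: a complementary pair of literals.\<close>
definition meg_contra :: "('f, 'r) meg_pos \<Rightarrow> bool" where
  "meg_contra S \<longleftrightarrow> (\<exists>a s s'. (Lit True a, s) \<in> S \<and> (Lit False a, s') \<in> S \<and>
                       (\<forall>x \<in> vars_atom a. s x = s' x))"

definition meg_winning :: "('f, 'r) fm \<Rightarrow> ('f, 'r) meg_strat \<Rightarrow> bool" where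
  "meg_winning \<phi> \<sigma> \<longleftrightarrow> meg_strategy \<phi> \<sigma> \<and>
     (\<forall>P. meg_play \<phi> \<sigma> P \<longrightarrow> (\<forall>k. \<not> meg_contra (fst (P k))))"

end

theory Submission
  imports Defs
begin

text \<open>Eloise plays MEG(\<phi>) by simulating \<tau>. Every pair (\<psi>, s) she ever has to defend is
  reached by a finite sequence of choices whose replay in M, with each constant c_n read
  as an element v n, is a \<tau>-play of G(M, \<phi>) ending in (\<psi>, v \<circ> s). When Abelard demands a
  witness at an existential node reached by the choice sequence cs, Eloise answers with c_n
  for n the code of cs, and v n is the element \<tau> picks there; since the replay of cs mentions
  only constants of smaller index, v is well defined by well-founded recursion. If \<tau> is
  winning, every literal reached in this way is true in M under v \<circ> s, so Abelard never
  obtains a complementary pair of literals.\<close>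

lemma eval_tm_cong:
  "(\<And>x. x \<in> vars_tm t \<Longrightarrow> s x = s' x) \<Longrightarrow> eval_tm M s t = eval_tm M s' t"
  by (induction t) (auto intro!: arg_cong2[where f = "fun_of M"] map_cong)

lemma holds_atom_cong:
  assumes "\<And>x. x \<in> vars_atom a \<Longrightarrow> s x = s' x"
  shows "holds_atom M s a = holds_atom M s' a"
proof (cases a)
  case (Eq t u)
  with assms show ?thesis using eval_tm_cong[of t s s' M] eval_tm_cong[of u s s' M] by simp
next
  case (Rel r ts)
  with assms have "map (eval_tm M s) ts = map (eval_tm M s') ts"
    by (auto intro!: map_cong eval_tm_cong)
  with Rel show ?thesis by (simp only: holds_atom.simps)
qed

lemma eg_play_snoc:
  assumes "eg_play \<phi> \<tau> ps" and "eg_next (last ps) q"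
    and "eg_eloise_turn (fst (last ps)) \<Longrightarrow> q = \<tau> ps"
  shows "eg_play \<phi> \<tau> (ps @ [q])"
proof -
  have "ps \<noteq> []" using assms(1) by (simp add: eg_play_def)
  have "eg_next ((ps @ [q]) ! i) ((ps @ [q]) ! Suc i) \<and>
    (eg_eloise_turn (fst ((ps @ [q]) ! i)) \<longrightarrow> (ps @ [q]) ! Suc i = \<tau> (take (Suc i) (ps @ [q])))"
    if "Suc i < length (ps @ [q])" for i
  proof (cases "Suc i < length ps")
    case True
    then show ?thesis using assms(1) by (simp add: eg_play_def nth_append)
  next
    case False
    with that have "Suc i = length ps" by simp
    moreover from this have "ps ! i = last ps"
      using \<open>ps \<noteq> []\<close> by (metis diff_Suc_1 last_conv_nth)
    ultimately show ?thesis using assms(2,3) by (simp add: nth_append)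
  qed
  with assms(1) \<open>ps \<noteq> []\<close> show ?thesis
    unfolding eg_play_def by (simp add: nth_append)
qed

fun amove_pair :: "('f, 'r) amove \<Rightarrow> ('f, 'r) meg_pair" where
  "amove_pair (AConj p0 p1 s b) = (And p0 p1, s)"
| "amove_pair (ADisj p0 p1 s) = (Or p0 p1, s)"
| "amove_pair (AAll x p s n) = (All x p, s)"
| "amove_pair (AEx x p s) = (Ex x p, s)"

lemma meg_abelard_ok_iff: "meg_abelard_ok S m \<longleftrightarrow> amove_pair m \<in> S"
  by (cases m) simp_all

lemma eg_eloise_turn_amove_pair: "eg_eloise_turn (fst (amove_pair m)) \<longleftrightarrow> eloise_demand m"
  by (cases m) simp_all

lemma not_is_lit_amove_pair: "\<not> is_lit (fst (amove_pair m))"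
  by (cases m) simp_all

text \<open>A choice is a branch (0 for the left one) at a connective and the index of a constant
  at a quantifier.\<close>
fun choice_step :: "('f, 'r) meg_pair \<Rightarrow> nat \<Rightarrow> ('f, 'r) meg_pair" where
  "choice_step (And p0 p1, s) c = (if c = 0 then p0 else p1, s)"
| "choice_step (Or p0 p1, s) c = (if c = 0 then p0 else p1, s)"
| "choice_step (All x p, s) c = (p, s(x \<mapsto> c))"
| "choice_step (Ex x p, s) c = (p, s(x \<mapsto> c))"
| "choice_step (Lit b a, s) c = (Lit b a, s)"

text \<open>Choice sequences are stored latest choice first.\<close>
primrec replay :: "('f, 'r) fm \<Rightarrow> nat list \<Rightarrow> ('f, 'r) meg_pair list" where
  "replay \<phi> [] = [(\<phi>, Map.empty)]"
| "replay \<phi> (c # cs) = replay \<phi> cs @ [choice_step (last (replay \<phi> cs)) c]"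

definition interp_pair :: "(nat \<Rightarrow> 'a) \<Rightarrow> ('f, 'r) meg_pair \<Rightarrow> ('f, 'r, 'a) eg_pos" where
  "interp_pair v q = (fst q, map_option v \<circ> snd q)"

lemma replay_not_Nil [simp]: "replay \<phi> cs \<noteq> []"
  by (cases cs) simp_all

lemma ran_choice_step: "ran (snd (choice_step q c)) \<subseteq> ran (snd q) \<union> {c}"
  by (induction q c rule: choice_step.induct) (auto simp: ran_def)

lemma ran_replay: "q \<in> set (replay \<phi> cs) \<Longrightarrow> ran (snd q) \<subseteq> set cs"
proof (induction cs arbitrary: q)
  case (Cons c cs)
  show ?case
  proof (cases "q \<in> set (replay \<phi> cs)")
    case True
    then show ?thesis using Cons.IH by fastforce
  next
    case False
    with Cons.prems have "q = choice_step (last (replay \<phi> cs)) c" by simp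
    moreover have "last (replay \<phi> cs) \<in> set (replay \<phi> cs)" by simp
    ultimately show ?thesis using Cons.IH ran_choice_step by fastforce
  qed
qed simp

lemma eg_next_choice_step:
  "\<not> is_lit (fst q) \<Longrightarrow> eg_next (interp_pair v q) (interp_pair v (choice_step q c))"
  by (induction q c rule: choice_step.induct) (auto simp: interp_pair_def)

lemma map_interp_pair_replay_cong:
  assumes "\<And>c. c \<in> set cs \<Longrightarrow> v c = w c"
  shows "map (interp_pair v) (replay \<phi> cs) = map (interp_pair w) (replay \<phi> cs)"
proof (rule map_cong[OF refl])
  fix q assume q: "q \<in> set (replay \<phi> cs)"
  have "(map_option v \<circ> snd q) x = (map_option w \<circ> snd q) x" for x
  proof (cases "snd q x")
    case (Some c)
    then have "c \<in> set cs" using ran_replay[OF q] by (auto simp: ran_def)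
    with Some assms show ?thesis by simp
  qed simp
  then show "interp_pair v q = interp_pair w q" by (auto simp: interp_pair_def)
qed

lemma less_list_encode: "c \<in> set cs \<Longrightarrow> c < list_encode cs"
proof (induction cs)
  case (Cons c' cs)
  have "c' \<le> prod_encode (c', list_encode cs)" "list_encode cs \<le> prod_encode (c', list_encode cs)"
    by (rule le_prod_encode_1, rule le_prod_encode_2)
  with Cons show ?case by auto
qed simp

definition witness_step ::
  "('f, 'r) fm \<Rightarrow> ('f, 'r, 'a) eg_strat \<Rightarrow> (nat \<Rightarrow> 'a) \<Rightarrow> nat \<Rightarrow> 'a" where
  "witness_step \<phi> \<tau> v n = (let cs = list_decode n in
     case fst (last (replay \<phi> cs)) of
       Ex x p \<Rightarrow> the (snd (\<tau> (map (interp_pair v) (replay \<phi> cs))) x)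
     | _ \<Rightarrow> undefined)"

definition const_interp :: "('f, 'r) fm \<Rightarrow> ('f, 'r, 'a) eg_strat \<Rightarrow> nat \<Rightarrow> 'a" where
  "const_interp \<phi> \<tau> = wfrec less_than (witness_step \<phi> \<tau>)"

lemma adm_wf_witness_step: "adm_wf less_than (witness_step \<phi> \<tau>)"
  unfolding adm_wf_def
proof (intro allI impI)
  fix v w :: "nat \<Rightarrow> 'a" and n
  assume "\<forall>m. (m, n) \<in> less_than \<longrightarrow> v m = w m"
  then have "\<And>c. c \<in> set (list_decode n) \<Longrightarrow> v c = w c"
    using less_list_encode[of _ "list_decode n"] by simp
  then have replay_eq: "map (interp_pair v) (replay \<phi> (list_decode n)) =
      map (interp_pair w) (replay \<phi> (list_decode n))"
    by (rule map_interp_pair_replay_cong)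
  show "witness_step \<phi> \<tau> v n = witness_step \<phi> \<tau> w n"
    unfolding witness_step_def Let_def replay_eq ..
qed

lemma const_interp_fixpoint: "const_interp \<phi> \<tau> = witness_step \<phi> \<tau> (const_interp \<phi> \<tau>)"
  unfolding const_interp_def by (rule wfrec_fixpoint[OF wf_less_than adm_wf_witness_step])

definition eg_replay :: "('f, 'r) fm \<Rightarrow> ('f, 'r, 'a) eg_strat \<Rightarrow> nat list \<Rightarrow> ('f, 'r, 'a) eg_pos list" where
  "eg_replay \<phi> \<tau> cs = map (interp_pair (const_interp \<phi> \<tau>)) (replay \<phi> cs)"

lemma last_eg_replay:
  "last (eg_replay \<phi> \<tau> cs) = interp_pair (const_interp \<phi> \<tau>) (last (replay \<phi> cs))"
  by (simp add: eg_replay_def last_map)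

lemma const_interp_list_encode:
  "fst (last (replay \<phi> cs)) = Ex x p \<Longrightarrow>
    const_interp \<phi> \<tau> (list_encode cs) = the (snd (\<tau> (eg_replay \<phi> \<tau> cs)) x)"
  by (subst const_interp_fixpoint) (simp add: witness_step_def eg_replay_def)

definition realised ::
  "('f, 'r) fm \<Rightarrow> ('f, 'r, 'a) eg_strat \<Rightarrow> nat list \<Rightarrow> ('f, 'r) meg_pair \<Rightarrow> bool" where
  "realised \<phi> \<tau> cs q \<longleftrightarrow> last (replay \<phi> cs) = q \<and> eg_play \<phi> \<tau> (eg_replay \<phi> \<tau> cs)"

lemma realised_Nil: "realised \<phi> \<tau> [] (\<phi>, Map.empty)"
  by (simp add: realised_def eg_replay_def eg_play_def interp_pair_def)

lemma realised_Cons: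
  assumes "realised \<phi> \<tau> cs q" and "\<not> is_lit (fst q)"
    and "eg_eloise_turn (fst q) \<Longrightarrow>
      interp_pair (const_interp \<phi> \<tau>) (choice_step q c) = \<tau> (eg_replay \<phi> \<tau> cs)"
  shows "realised \<phi> \<tau> (c # cs) (choice_step q c)"
proof -
  let ?v = "const_interp \<phi> \<tau>"
  have last: "last (eg_replay \<phi> \<tau> cs) = interp_pair ?v q"
    using assms(1) by (simp add: realised_def last_eg_replay)
  have "eg_play \<phi> \<tau> (eg_replay \<phi> \<tau> cs)"
    using assms(1) by (simp add: realised_def)
  then have "eg_play \<phi> \<tau> (eg_replay \<phi> \<tau> cs @ [interp_pair ?v (choice_step q c)])"
  proof (rule eg_play_snoc)
    show "eg_next (last (eg_replay \<phi> \<tau> cs)) (interp_pair ?v (choice_step q c))"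
      unfolding last using assms(2) by (rule eg_next_choice_step)
  next
    assume "eg_eloise_turn (fst (last (eg_replay \<phi> \<tau> cs)))"
    then have "eg_eloise_turn (fst q)" by (simp add: last interp_pair_def)
    then show "interp_pair ?v (choice_step q c) = \<tau> (eg_replay \<phi> \<tau> cs)" by (rule assms(3))
  qed
  with assms(1) show ?thesis by (simp add: realised_def eg_replay_def)
qed

definition eloise_choice :: "('f, 'r) fm \<Rightarrow> ('f, 'r, 'a) eg_strat \<Rightarrow> nat list \<Rightarrow> nat" where
  "eloise_choice \<phi> \<tau> cs = (case fst (last (replay \<phi> cs)) of
     Or p0 p1 \<Rightarrow> if fst (\<tau> (eg_replay \<phi> \<tau> cs)) = p0 then 0 else 1
   | _ \<Rightarrow> list_encode cs)"

lemma realised_eloise_choice: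
  assumes "eg_strategy \<phi> \<tau>" and "realised \<phi> \<tau> cs q" and "eg_eloise_turn (fst q)"
  shows "realised \<phi> \<tau> (eloise_choice \<phi> \<tau> cs # cs) (choice_step q (eloise_choice \<phi> \<tau> cs))"
proof (rule realised_Cons[OF assms(2)])
  obtain \<psi> s where q: "q = (\<psi>, s)" by fastforce
  define v where "v = const_interp \<phi> \<tau>"
  have last: "last (eg_replay \<phi> \<tau> cs) = (\<psi>, map_option v \<circ> s)" "last (replay \<phi> cs) = q"
    using assms(2) by (simp_all add: realised_def last_eg_replay interp_pair_def q v_def)
  have "eg_play \<phi> \<tau> (eg_replay \<phi> \<tau> cs)" using assms(2) by (simp add: realised_def)
  then have next_pos: "eg_next (\<psi>, map_option v \<circ> s) (\<tau> (eg_replay \<phi> \<tau> cs))"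
    using assms(1,3) last(1) q by (auto simp: eg_strategy_def)
  show "interp_pair v (choice_step q (eloise_choice \<phi> \<tau> cs)) = \<tau> (eg_replay \<phi> \<tau> cs)"
  proof (cases \<psi>)
    case (Or p0 p1)
    with next_pos last(2) q show ?thesis by (auto simp: eloise_choice_def interp_pair_def)
  next
    case (Ex x p)
    with next_pos obtain a where a: "\<tau> (eg_replay \<phi> \<tau> cs) = (p, (map_option v \<circ> s)(x \<mapsto> a))"
      by auto
    with Ex last(2) q have "v (list_encode cs) = a"
      using const_interp_list_encode[of \<phi> cs x p \<tau>] by (simp add: v_def)
    with Ex a last(2) q show ?thesis by (simp add: eloise_choice_def interp_pair_def)
  qed (use assms(3) q in simp_all)
qed (use assms(3) in \<open>cases "fst q"; simp\<close>)

definition meg_response ::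
  "('f, 'r) fm \<Rightarrow> ('f, 'r, 'a) eg_strat \<Rightarrow> ('f, 'r) amove \<Rightarrow> ('f, 'r) meg_pair" where
  "meg_response \<phi> \<tau> m = choice_step (amove_pair m) (case m of
       AConj p0 p1 s b \<Rightarrow> if b then 1 else 0
     | AAll x p s n \<Rightarrow> n
     | _ \<Rightarrow> eloise_choice \<phi> \<tau> (SOME cs. realised \<phi> \<tau> cs (amove_pair m)))"

definition meg_strat_of :: "('f, 'r) fm \<Rightarrow> ('f, 'r, 'a) eg_strat \<Rightarrow> ('f, 'r) meg_strat" where
  "meg_strat_of \<phi> \<tau> h = fst (last h) \<union> {meg_response \<phi> \<tau> (snd (last h))}"

lemma meg_step_strat_of:
  "meg_step (meg_strat_of \<phi> \<tau>) h S' \<longleftrightarrow> S' = fst (last h) \<union> {meg_response \<phi> \<tau> (snd (last h))}"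
  by (cases "snd (last h)") (auto simp: meg_step_def meg_strat_of_def meg_response_def)

lemma meg_eloise_ok_response:
  "eloise_demand m \<Longrightarrow> meg_eloise_ok S m (S \<union> {meg_response \<phi> \<tau> m})"
  by (cases m) (auto simp: meg_response_def)

lemma realised_response:
  assumes "eg_strategy \<phi> \<tau>" and "realised \<phi> \<tau> cs (amove_pair m)"
  shows "\<exists>cs'. realised \<phi> \<tau> cs' (meg_response \<phi> \<tau> m)"
proof (cases "eloise_demand m")
  case True
  define cs0 where "cs0 = (SOME cs. realised \<phi> \<tau> cs (amove_pair m))"
  have "realised \<phi> \<tau> cs0 (amove_pair m)"
    unfolding cs0_def using assms(2) by (rule someI)
  then have "realised \<phi> \<tau> (eloise_choice \<phi> \<tau> cs0 # cs0)
      (choice_step (amove_pair m) (eloise_choice \<phi> \<tau> cs0))"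
    using assms(1) True eg_eloise_turn_amove_pair by (blast intro: realised_eloise_choice)
  moreover have "meg_response \<phi> \<tau> m = choice_step (amove_pair m) (eloise_choice \<phi> \<tau> cs0)"
    using True by (cases m) (simp_all add: meg_response_def cs0_def)
  ultimately show ?thesis by auto
next
  case False
  obtain c where "meg_response \<phi> \<tau> m = choice_step (amove_pair m) c"
    unfolding meg_response_def by blast
  moreover have "realised \<phi> \<tau> (c # cs) (choice_step (amove_pair m) c)"
    using assms(2) not_is_lit_amove_pair False eg_eloise_turn_amove_pair
    by (blast intro: realised_Cons)
  ultimately show ?thesis by auto
qed

lemma meg_partial_realised:
  assumes "eg_strategy \<phi> \<tau>" and "meg_partial \<phi> (meg_strat_of \<phi> \<tau>) h"
  shows "k < length h \<Longrightarrow> q \<in> fst (h ! k) \<Longrightarrow> \<exists>cs. realised \<phi> \<tau> cs q"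
proof (induction k arbitrary: q)
  case 0
  with assms(2) realised_Nil show ?case by (auto simp: meg_partial_def)
next
  case (Suc k)
  have "last (take (Suc k) h) = h ! k"
    using Suc.prems(1) by (simp add: take_Suc_conv_app_nth)
  then have "fst (h ! Suc k) = fst (h ! k) \<union> {meg_response \<phi> \<tau> (snd (h ! k))}"
    using assms(2) Suc.prems(1) by (simp add: meg_partial_def meg_step_strat_of)
  moreover have "\<exists>cs. realised \<phi> \<tau> cs (amove_pair (snd (h ! k)))"
    using Suc.IH Suc.prems(1) assms(2) by (simp add: meg_partial_def meg_abelard_ok_iff)
  ultimately consider "\<exists>cs. realised \<phi> \<tau> cs (amove_pair (snd (h ! k)))"
      and "q = meg_response \<phi> \<tau> (snd (h ! k))"
    | "q \<in> fst (h ! k)"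
    using Suc.prems(2) by auto
  then show ?case
  proof cases
    case 1
    then show ?thesis using realised_response[OF assms(1)] by blast
  next
    case 2
    then show ?thesis using Suc.IH Suc.prems(1) by simp
  qed
qed

lemma realised_Lit:
  assumes "eg_winning M \<phi> \<tau>" and "realised \<phi> \<tau> cs (Lit b a, s)"
  shows "b = holds_atom M (map_option (const_interp \<phi> \<tau>) \<circ> s) a"
proof -
  have "last (eg_replay \<phi> \<tau> cs) = (Lit b a, map_option (const_interp \<phi> \<tau>) \<circ> s)"
    and "eg_play \<phi> \<tau> (eg_replay \<phi> \<tau> cs)"
    using assms(2) by (simp_all add: realised_def last_eg_replay interp_pair_def)
  with assms(1)[unfolded eg_winning_def, THEN conjunct2, rule_format, of "eg_replay \<phi> \<tau> cs" b a]
  show ?thesis by simp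
qed

lemma not_meg_contra_if_realised:
  assumes "eg_winning M \<phi> \<tau>" and "\<And>q. q \<in> S \<Longrightarrow> \<exists>cs. realised \<phi> \<tau> cs q"
  shows "\<not> meg_contra S"
proof
  assume "meg_contra S"
  then obtain a s s' where lits: "(Lit True a, s) \<in> S" "(Lit False a, s') \<in> S"
    and agree: "\<forall>x \<in> vars_atom a. s x = s' x"
    unfolding meg_contra_def by blast
  obtain cs cs' where "realised \<phi> \<tau> cs (Lit True a, s)" "realised \<phi> \<tau> cs' (Lit False a, s')"
    using assms(2) lits by blast
  from realised_Lit[OF assms(1) this(1)] realised_Lit[OF assms(1) this(2)]
  have "holds_atom M (map_option (const_interp \<phi> \<tau>) \<circ> s) a"
    "\<not> holds_atom M (map_option (const_interp \<phi> \<tau>) \<circ> s') a"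
    by simp_all
  moreover have "holds_atom M (map_option (const_interp \<phi> \<tau>) \<circ> s) a =
      holds_atom M (map_option (const_interp \<phi> \<tau>) \<circ> s') a"
    using agree by (intro holds_atom_cong) simp
  ultimately show False by simp
qed

theorem theorem2:
  fixes M :: "('f::countable, 'r::countable, 'a) struc"
    and \<phi> :: "('f, 'r) fm"
  assumes "sentence \<phi>"
  shows "\<exists>\<Phi> :: ('f, 'r, 'a) eg_strat \<Rightarrow> ('f, 'r) meg_strat.
           \<forall>\<tau>. eg_strategy \<phi> \<tau> \<longrightarrow>
                 meg_strategy \<phi> (\<Phi> \<tau>) \<and>
                 (eg_winning M \<phi> \<tau> \<longrightarrow> meg_winning \<phi> (\<Phi> \<tau>))"
proof (intro exI[of _ "meg_strat_of \<phi>"] allI impI conjI)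
  fix \<tau> :: "('f, 'r, 'a) eg_strat"
  assume strategy: "eg_strategy \<phi> \<tau>"
  show meg_strategy: "meg_strategy \<phi> (meg_strat_of \<phi> \<tau>)"
    unfolding meg_strategy_def meg_strat_of_def using meg_eloise_ok_response by blast
  assume winning: "eg_winning M \<phi> \<tau>"
  have "\<not> meg_contra (fst (P k))" if "meg_play \<phi> (meg_strat_of \<phi> \<tau>) P" for P k
  proof (rule not_meg_contra_if_realised[OF winning])
    have "meg_partial \<phi> (meg_strat_of \<phi> \<tau>) (map P [0..<Suc k])"
      using that by (simp add: meg_play_def del: upt_Suc)
    from meg_partial_realised[OF strategy this, of k]
    show "\<exists>cs. realised \<phi> \<tau> cs q" if "q \<in> fst (P k)" for q
      using that by (simp del: upt_Suc)
  qed
  with meg_strategy show "meg_winning \<phi> (meg_strat_of \<phi> \<tau>)"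
    unfolding meg_winning_def by blast
qed

end
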